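(* Let $N \ge 3$, let $0 \le z_1 < \dots < z_N < 1$ and let $\mu = \sum_{i=1}^N N^{-1}\delta_{z_i}$ be the uniform discrete probability distribution on $[0,1]$. Then the eigenvalues of the $\mu$-Laplacian $\Delta^\mu$ are $\lambda_l = -2N^2 + 2N^2\cos(2\pi l/N)$ for $l\in\{0,\dots,N-1\}$, with corresponding eigenfunctions $f_l \in \mathscr D^2_\mu$ given by: (1) $f_0$ is the constant function with value $1$; (2) for $0 < l < N/2$: $f_l|_{[0,z_1]\cup(z_N,1]} = 0$ and $f_l|_{(z_j,z_{j+1}]} = \operatorname{Im}\big(e^{2\pi\mathbf i\, jl/N}\big)$ for $j\in\{1,\dots,N-1\}$; (3) for $N/2 \le l \le N-1$: $f_l|_{[0,z_1]\cup(z_N,1]} = 1$ and $f_l|_{(z_j,z_{j+1}]} = \operatorname{Re}\big(e^{2\pi\mathbf i\, jl/N}\big)$ for $j\in\{1,\dots,N-1\}$.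
   Context: $\delta_z$ is the Dirac measure at $z$; $\mathbf i$ is the imaginary unit. $L^2_\mu$ is the space of $\mu$-a.e. classes of real square-integrable functions on $[0,1]$ with inner product $\langle f,g\rangle_\mu = \sum_{i=1}^N \alpha_i f(z_i)g(z_i)$ (here $\alpha_i = 1/N$). $\mathscr D^1_\mu$ is the set of functions $f$ on $[0,1]$ for which there is $f' \in L^2_\mu$ with $f(0)=f(1)$ and $f(x) = f(0) + \int \mathbf 1_{[0,x)} f'\,d\mu$ for all $x\in[0,1]$ (with $[0,0)=\emptyset$); then $\nabla^\mu f := f'$, explicitly $\nabla^\mu f(z_n) = (f(z_{n+1})-f(z_n))/\alpha_n$ for $n<N$ and $\nabla^\mu f(z_N) = (f(z_1)-f(z_N))/\alpha_N$. Every class of $L^2_\mu$ has a representative in $\mathscr D^1_\mu$. The energy form is $\mathcal E(f,g) = \langle \nabla^\mu f, \nabla^\mu g\rangle_\mu$. A function $f \in \mathscr D^1_\mu$ belongs to $\mathscr D^2_\mu$ if there is $h \in L^2_\mu$ with $\mathcal E(f,g) = -\langle h, g\rangle_\mu$ for all $g\in\mathscr D^1_\mu$, and then $\Delta^\mu f := h$. *)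

theory Defs
  imports "HOL-Analysis.Analysis"
begin

text \<open>Discrete uniform measure mu = sum_{i=1}^N (1/N) delta_{z i}, with atoms
  z 1 < ... < z N in [0,1).  Functions on [0,1] are represented as real => real
  (values outside [0,1] are irrelevant); an element of L^2_mu is represented by
  any function, two functions being equal in L^2_mu iff they agree at all z i.\<close>

definition mu_ip :: "nat \<Rightarrow> (nat \<Rightarrow> real) \<Rightarrow> (real \<Rightarrow> real) \<Rightarrow> (real \<Rightarrow> real) \<Rightarrow> real" where
  "mu_ip N z f g = (\<Sum>i\<in>{1..N}. (1 / real N) * f (z i) * g (z i))"

definition mu_int_below :: "nat \<Rightarrow> (nat \<Rightarrow> real) \<Rightarrow> (real \<Rightarrow> real) \<Rightarrow> real \<Rightarrow> real" where
  "mu_int_below N z g x = (\<Sum>i\<in>{1..N}. if 0 \<le> z i \<and> z i < x then (1 / real N) * g (z i) else 0)"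

definition D1 :: "nat \<Rightarrow> (nat \<Rightarrow> real) \<Rightarrow> (real \<Rightarrow> real) \<Rightarrow> bool" where
  "D1 N z f \<longleftrightarrow> f 0 = f 1 \<and>
     (\<exists>f'. \<forall>x\<in>{0..1}. f x = f 0 + mu_int_below N z f' x)"

definition mu_grad :: "nat \<Rightarrow> (nat \<Rightarrow> real) \<Rightarrow> (real \<Rightarrow> real) \<Rightarrow> nat \<Rightarrow> real" where
  "mu_grad N z f n =
     (if n < N then (f (z (Suc n)) - f (z n)) / (1 / real N)
      else (f (z 1) - f (z N)) / (1 / real N))"

definition energy :: "nat \<Rightarrow> (nat \<Rightarrow> real) \<Rightarrow> (real \<Rightarrow> real) \<Rightarrow> (real \<Rightarrow> real) \<Rightarrow> real" where
  "energy N z f g = (\<Sum>i\<in>{1..N}. (1 / real N) * mu_grad N z f i * mu_grad N z g i)"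

definition is_mu_laplacian :: "nat \<Rightarrow> (nat \<Rightarrow> real) \<Rightarrow> (real \<Rightarrow> real) \<Rightarrow> (real \<Rightarrow> real) \<Rightarrow> bool" where
  "is_mu_laplacian N z f h \<longleftrightarrow>
     (\<forall>g. D1 N z g \<longrightarrow> energy N z f g = - mu_ip N z h g)"

definition D2 :: "nat \<Rightarrow> (nat \<Rightarrow> real) \<Rightarrow> (real \<Rightarrow> real) \<Rightarrow> bool" where
  "D2 N z f \<longleftrightarrow> D1 N z f \<and> (\<exists>h. is_mu_laplacian N z f h)"

definition mu_nonzero :: "nat \<Rightarrow> (nat \<Rightarrow> real) \<Rightarrow> (real \<Rightarrow> real) \<Rightarrow> bool" where
  "mu_nonzero N z f \<longleftrightarrow> (\<exists>i\<in>{1..N}. f (z i) \<noteq> 0)"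

definition mu_eigenvalue :: "nat \<Rightarrow> (nat \<Rightarrow> real) \<Rightarrow> real \<Rightarrow> bool" where
  "mu_eigenvalue N z lam \<longleftrightarrow>
     (\<exists>f. D2 N z f \<and> mu_nonzero N z f \<and> is_mu_laplacian N z f (\<lambda>x. lam * f x))"

end

theory Submission
  imports Defs
begin

text \<open>Since \<open>\<mu>\<close> lives on the atoms, a function in \<open>D\<^sup>1\<close> matters only through its values
  \<open>F k = f (z k)\<close>, and every vector of values is attained. Summation by parts in the energy form then
  identifies \<open>\<Delta>\<^sup>\<mu>\<close> with the second difference operator \<open>N\<^sup>2 (F (k+1) - 2 F k + F (k-1))\<close>
  on the cycle \<open>\<int>/N\<close>. Its eigenvectors are the Fourier modes \<open>sin\<close> and \<open>cos\<close> of
  \<open>2\<pi>l(k-1)/N\<close> with eigenvalues \<open>2N\<^sup>2(cos(2\<pi>l/N) - 1)\<close>; conversely a nonzero eigenvector has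
  a nonzero discrete Fourier coefficient, which forces its eigenvalue into this list. The prescribed
  \<open>f l\<close> are step functions whose values on the atoms are exactly such modes.\<close>

definition cyc_succ :: "nat \<Rightarrow> nat \<Rightarrow> nat" where
  "cyc_succ N i = (if i < N then Suc i else 1)"

definition cyc_pred :: "nat \<Rightarrow> nat \<Rightarrow> nat" where
  "cyc_pred N i = (if i = 1 then N else i - 1)"

lemma cyc_succ_in_range: "i \<in> {1..N} \<Longrightarrow> cyc_succ N i \<in> {1..N}"
  and cyc_pred_in_range: "i \<in> {1..N} \<Longrightarrow> cyc_pred N i \<in> {1..N}"
  by (auto simp: cyc_succ_def cyc_pred_def)

lemma cyc_succ_pred: "i \<in> {1..N} \<Longrightarrow> cyc_succ N (cyc_pred N i) = i"
  by (auto simp: cyc_succ_def cyc_pred_def)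

lemma bij_betw_cyc_succ: "bij_betw (cyc_succ N) {1..N} {1..N}"
  by (rule bij_betw_byWitness[where f'="cyc_pred N"]) (auto simp: cyc_succ_def cyc_pred_def)

lemma bij_betw_cyc_pred: "bij_betw (cyc_pred N) {1..N} {1..N}"
  by (rule bij_betw_byWitness[where f'="cyc_succ N"]) (auto simp: cyc_succ_def cyc_pred_def)

lemma sum_reindex_cyc_succ: "(\<Sum>i\<in>{1..N}. g (cyc_succ N i)) = (\<Sum>i\<in>{1..N}. g i)"
  using sum.reindex_bij_betw[OF bij_betw_cyc_succ] .

lemma sum_reindex_cyc_pred: "(\<Sum>i\<in>{1..N}. g (cyc_pred N i)) = (\<Sum>i\<in>{1..N}. g i)"
  using sum.reindex_bij_betw[OF bij_betw_cyc_pred] .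

lemma sum_cyc_succ_telescope:
  fixes F :: "nat \<Rightarrow> 'a::ab_group_add"
  assumes "1 \<le> N" "j \<le> N"
  shows "(\<Sum>i=1..j. F (cyc_succ N i) - F i) = F (cyc_succ N j) - F 1"
  using assms(2) by (induction j) (use assms(1) in \<open>auto simp: cyc_succ_def\<close>)

definition cyc_laplacian :: "nat \<Rightarrow> (nat \<Rightarrow> real) \<Rightarrow> nat \<Rightarrow> real" where
  "cyc_laplacian N F k = real N ^ 2 * (F (cyc_succ N k) - 2 * F k + F (cyc_pred N k))"

lemma cyc_laplacian_cong:
  assumes "\<forall>i\<in>{1..N}. F i = G i" "k \<in> {1..N}"
  shows "cyc_laplacian N F k = cyc_laplacian N G k"
  using assms cyc_succ_in_range[OF assms(2)] cyc_pred_in_range[OF assms(2)]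
  by (simp add: cyc_laplacian_def)

lemma cyc_summation_by_parts:
  fixes F G :: "nat \<Rightarrow> 'a::comm_ring_1"
  shows "(\<Sum>i\<in>{1..N}. (F (cyc_succ N i) - F i) * (G (cyc_succ N i) - G i))
       = - (\<Sum>i\<in>{1..N}. (F (cyc_succ N i) - 2 * F i + F (cyc_pred N i)) * G i)"
proof -
  have succ_succ: "(\<Sum>i\<in>{1..N}. F (cyc_succ N i) * G (cyc_succ N i)) = (\<Sum>i\<in>{1..N}. F i * G i)"
    by (rule sum_reindex_cyc_succ)
  have succ_right: "(\<Sum>i\<in>{1..N}. F i * G (cyc_succ N i)) = (\<Sum>i\<in>{1..N}. F (cyc_pred N i) * G i)"
    using sum_reindex_cyc_pred[of "\<lambda>i. F i * G (cyc_succ N i)" N]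
    by (auto simp: cyc_succ_pred intro: sum.cong)
  have "(\<Sum>i\<in>{1..N}. (F (cyc_succ N i) - F i) * (G (cyc_succ N i) - G i))
      = (\<Sum>i\<in>{1..N}. F (cyc_succ N i) * G (cyc_succ N i)) - (\<Sum>i\<in>{1..N}. F (cyc_succ N i) * G i)
        - (\<Sum>i\<in>{1..N}. F i * G (cyc_succ N i)) + (\<Sum>i\<in>{1..N}. F i * G i)"
    by (simp add: algebra_simps sum.distrib sum_subtractf)
  also have "\<dots> = - (\<Sum>i\<in>{1..N}. (F (cyc_succ N i) - 2 * F i + F (cyc_pred N i)) * G i)"
    unfolding succ_succ succ_right by (simp add: algebra_simps sum.distrib sum_subtractf sum_distrib_left)
  finally show ?thesis .
qed

lemma energy_eq_sum_cyc_laplacian: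
  assumes "1 \<le> N"
  shows "energy N z f g = - (\<Sum>i\<in>{1..N}. (1 / real N) * cyc_laplacian N (f \<circ> z) i * g (z i))"
proof -
  have grad: "mu_grad N z f i = real N * ((f \<circ> z) (cyc_succ N i) - (f \<circ> z) i)" if "i \<in> {1..N}" for f i
    using that by (auto simp: mu_grad_def cyc_succ_def)
  have "energy N z f g
      = real N * (\<Sum>i\<in>{1..N}. ((f \<circ> z) (cyc_succ N i) - (f \<circ> z) i) * ((g \<circ> z) (cyc_succ N i) - (g \<circ> z) i))"
    unfolding energy_def sum_distrib_left using assms by (intro sum.cong) (auto simp: grad)
  also have "\<dots> = - (\<Sum>i\<in>{1..N}. (1 / real N) * cyc_laplacian N (f \<circ> z) i * g (z i))"
    unfolding cyc_summation_by_parts cyc_laplacian_def sum_distrib_left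
    using assms by (simp add: sum_distrib_left power2_eq_square sum_negf mult.assoc)
  finally show ?thesis .
qed

definition cycle_eigenvalue :: "nat \<Rightarrow> nat \<Rightarrow> real" where
  "cycle_eigenvalue N l = - 2 * real N ^ 2 + 2 * real N ^ 2 * cos (2 * pi * real l / real N)"

lemma sin_cos_add_2pi_nat:
  fixes s :: "real \<Rightarrow> real"
  assumes "s = sin \<or> s = cos"
  shows "s (x + 2 * pi * real n) = s x"
  using assms sin_int_2pin[of "int n"] cos_int_2pin[of "int n"] by (auto simp: sin_add cos_add)

lemma sin_cos_add_diff:
  fixes s :: "real \<Rightarrow> real"
  assumes "s = sin \<or> s = cos"
  shows "s (a + t) + s (a - t) = 2 * cos t * s a"
  using assms by (auto simp: sin_add sin_diff cos_add cos_diff)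

lemma cyc_laplacian_trig_eigenvector:
  fixes l N :: nat
  defines "\<theta> \<equiv> 2 * pi * real l / real N"
  assumes s: "s = sin \<or> s = cos" and k: "k \<in> {1..N}"
  shows "cyc_laplacian N (\<lambda>k. s (real (k - 1) * \<theta>)) k = cycle_eigenvalue N l * s (real (k - 1) * \<theta>)"
proof -
  define a where "a = real (k - 1) * \<theta>"
  have full_turn: "real N * \<theta> = 2 * pi * real l"
    using k by (simp add: \<theta>_def)
  have succ: "s (real (cyc_succ N k - 1) * \<theta>) = s (a + \<theta>)"
  proof (cases "k < N")
    case False
    then have "a + \<theta> = 0 + 2 * pi * real l"
      using k full_turn by (simp add: a_def of_nat_diff algebra_simps)
    then show ?thesis
      using False sin_cos_add_2pi_nat[OF s, of 0 l] by (simp add: cyc_succ_def)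
  qed (use k in \<open>simp add: cyc_succ_def a_def of_nat_diff algebra_simps\<close>)
  have pred: "s (real (cyc_pred N k - 1) * \<theta>) = s (a - \<theta>)"
  proof (cases "k = 1")
    case True
    then have "real (N - 1) * \<theta> = (a - \<theta>) + 2 * pi * real l"
      using k full_turn by (simp add: a_def of_nat_diff algebra_simps)
    then show ?thesis
      using True sin_cos_add_2pi_nat[OF s] by (simp add: cyc_pred_def)
  qed (use k in \<open>simp add: cyc_pred_def a_def of_nat_diff algebra_simps\<close>)
  have "s (a + \<theta>) + s (a - \<theta>) = 2 * cos \<theta> * s a"
    by (rule sin_cos_add_diff[OF s])
  then show ?thesis
    unfolding cyc_laplacian_def succ pred cycle_eigenvalue_def \<theta>_def[symmetric] a_def[symmetric]
    by (simp add: algebra_simps)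
qed

lemma cis_root_of_unity_pow_eq_1_iff:
  assumes "1 \<le> N"
  shows "cis (2 * pi / real N) ^ j = 1 \<longleftrightarrow> N dvd j"
proof -
  have "cis (2 * pi / real N) ^ j = exp (2 * of_real pi * \<i> * of_nat j / of_nat N)"
    unfolding Complex.DeMoivre by (simp add: cis_conv_exp field_simps)
  then show ?thesis
    using complex_root_unity_eq_1[OF assms] by simp
qed

lemma sum_cyc_succ_twisted:
  fixes G :: "nat \<Rightarrow> 'a::comm_ring_1"
  assumes "\<rho> ^ N = 1"
  shows "\<rho> * (\<Sum>k\<in>{1..N}. G (cyc_succ N k) * \<rho> ^ k) = (\<Sum>k\<in>{1..N}. G k * \<rho> ^ k)"
proof -
  have "\<rho> * (\<Sum>k\<in>{1..N}. G (cyc_succ N k) * \<rho> ^ k) = (\<Sum>k\<in>{1..N}. G (cyc_succ N k) * \<rho> ^ cyc_succ N k)"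
    unfolding sum_distrib_left using assms by (intro sum.cong) (auto simp: cyc_succ_def)
  then show ?thesis
    using sum_reindex_cyc_succ[of "\<lambda>k. G k * \<rho> ^ k"] by simp
qed

lemma sum_cyc_pred_twisted:
  fixes G :: "nat \<Rightarrow> 'a::comm_ring_1"
  assumes "\<rho> ^ N = 1"
  shows "(\<Sum>k\<in>{1..N}. G (cyc_pred N k) * \<rho> ^ k) = \<rho> * (\<Sum>k\<in>{1..N}. G k * \<rho> ^ k)"
proof -
  have pow_pred: "\<rho> ^ k = \<rho> * \<rho> ^ (k - 1)" if "1 \<le> k" for k
    using that by (cases k) auto
  have "(\<Sum>k\<in>{1..N}. G (cyc_pred N k) * \<rho> ^ k) = \<rho> * (\<Sum>k\<in>{1..N}. G (cyc_pred N k) * \<rho> ^ cyc_pred N k)"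
    unfolding sum_distrib_left using assms
    by (intro sum.cong) (auto simp: cyc_pred_def pow_pred)
  then show ?thesis
    using sum_reindex_cyc_pred[of "\<lambda>k. G k * \<rho> ^ k"] by simp
qed

lemma char_eq_cis_imp_cos:
  assumes "cis \<theta> * of_real lam = of_real a * (1 - 2 * cis \<theta> + cis \<theta> ^ 2)"
  shows "lam = a * (2 * cos \<theta> - 2)"
proof -
  have "of_real lam = cis (- \<theta>) * (cis \<theta> * of_real lam)"
    by (simp add: cis_mult)
  also have "\<dots> = of_real a * (cis (- \<theta>) - 2 + cis \<theta>)"
    unfolding assms by (simp add: algebra_simps power2_eq_square cis_mult)
  finally have "lam = Re (of_real a * (cis (- \<theta>) - 2 + cis \<theta>))"
    by (metis Re_complex_of_real)
  then show ?thesis by (simp add: algebra_simps)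
qed

definition cyc_dft :: "nat \<Rightarrow> (nat \<Rightarrow> real) \<Rightarrow> nat \<Rightarrow> complex" where
  "cyc_dft N F l = (\<Sum>k\<in>{1..N}. of_real (F k) * cis (2 * pi / real N) ^ (l * k))"

lemma cyc_dft_nonzero_imp_eigenvalue:
  assumes N: "1 \<le> N" and eigen: "\<forall>k\<in>{1..N}. cyc_laplacian N F k = lam * F k"
    and nonzero: "cyc_dft N F l \<noteq> 0"
  shows "lam = cycle_eigenvalue N l"
proof -
  define \<theta> where "\<theta> = 2 * pi * real l / real N"
  define \<rho> where "\<rho> = cis \<theta>"
  define G where "G k = complex_of_real (F k)" for k
  define C where "C = (\<Sum>k\<in>{1..N}. G k * \<rho> ^ k)"
  have \<rho>_pow: "\<rho> ^ k = cis (2 * pi / real N) ^ (l * k)" for k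
    unfolding \<rho>_def \<theta>_def Complex.DeMoivre by (simp add: field_simps)
  have \<rho>_root: "\<rho> ^ N = 1"
    unfolding \<rho>_pow using cis_root_of_unity_pow_eq_1_iff[OF N] by simp
  have C: "C = cyc_dft N F l"
    by (simp add: C_def cyc_dft_def G_def \<rho>_pow)
  define S_succ where "S_succ = (\<Sum>k\<in>{1..N}. G (cyc_succ N k) * \<rho> ^ k)"
  define S_pred where "S_pred = (\<Sum>k\<in>{1..N}. G (cyc_pred N k) * \<rho> ^ k)"
  have "of_real lam * C = (\<Sum>k\<in>{1..N}. of_real (cyc_laplacian N F k) * \<rho> ^ k)"
    unfolding C_def sum_distrib_left G_def using eigen by (intro sum.cong) auto
  also have "\<dots> = of_real (real N ^ 2) * (S_succ - 2 * C + S_pred)"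
    by (simp add: S_succ_def S_pred_def C_def G_def cyc_laplacian_def algebra_simps
        sum.distrib sum_subtractf sum_distrib_left)
  finally have "\<rho> * (of_real lam * C) = \<rho> * (of_real (real N ^ 2) * (S_succ - 2 * C + S_pred))"
    by (rule arg_cong)
  also have "\<dots> = of_real (real N ^ 2) * (\<rho> * S_succ - 2 * \<rho> * C + \<rho> * S_pred)"
    by (simp add: algebra_simps)
  also have "\<dots> = of_real (real N ^ 2) * (1 - 2 * \<rho> + \<rho> ^ 2) * C"
    unfolding S_succ_def S_pred_def C_def sum_cyc_succ_twisted[OF \<rho>_root] sum_cyc_pred_twisted[OF \<rho>_root]
    by (simp add: algebra_simps power2_eq_square)
  finally have "(\<rho> * of_real lam) * C = (of_real (real N ^ 2) * (1 - 2 * \<rho> + \<rho> ^ 2)) * C"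
    by (simp add: mult.assoc)
  then have "cis \<theta> * of_real lam = of_real (real N ^ 2) * (1 - 2 * cis \<theta> + cis \<theta> ^ 2)"
    using nonzero C by (simp add: \<rho>_def)
  then have "lam = real N ^ 2 * (2 * cos \<theta> - 2)"
    by (rule char_eq_cis_imp_cos)
  then show ?thesis
    unfolding cycle_eigenvalue_def \<theta>_def by (simp add: algebra_simps)
qed

lemma cyc_dft_eq_0_imp_eq_0:
  assumes N: "1 \<le> N" and dft_zero: "\<forall>l<N. cyc_dft N F l = 0" and m: "m \<in> {1..N}"
  shows "F m = 0"
proof -
  define \<omega> where "\<omega> = cis (2 * pi / real N)"
  have root: "\<omega> ^ j = 1 \<longleftrightarrow> N dvd j" for j
    unfolding \<omega>_def by (rule cis_root_of_unity_pow_eq_1_iff[OF N])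
  have orthogonality: "(\<Sum>l<N. (\<omega> ^ (k + N - m)) ^ l) = (if k = m then of_nat N else 0)"
    if k: "k \<in> {1..N}" for k
  proof (cases "k = m")
    case True
    then show ?thesis using root[of N] by simp
  next
    case False
    have "\<not> N dvd (k + N - m)"
    proof
      assume "N dvd (k + N - m)"
      then obtain c where c: "k + N - m = N * c" by (elim dvdE)
      have "0 < k + N - m" "k + N - m < N * 2" using k m by auto
      then have "0 < N * c" "N * c < N * 2" unfolding c .
      then have "c = 1" by (cases c) auto
      then show False using c k m False by auto
    qed
    moreover have "(\<omega> ^ (k + N - m)) ^ N = 1"
      using root[of "(k + N - m) * N"] by (simp add: power_mult)
    ultimately show ?thesis
      using False root by (simp add: geometric_sum)
  qed
  have "0 = (\<Sum>l<N. cyc_dft N F l * \<omega> ^ (l * (N - m)))"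
    using dft_zero by simp
  also have "\<dots> = (\<Sum>l<N. \<Sum>k\<in>{1..N}. of_real (F k) * (\<omega> ^ (l * k) * \<omega> ^ (l * (N - m))))"
    by (simp add: cyc_dft_def \<omega>_def sum_distrib_right mult.assoc)
  also have "\<dots> = (\<Sum>l<N. \<Sum>k\<in>{1..N}. of_real (F k) * (\<omega> ^ (k + N - m)) ^ l)"
  proof (intro sum.cong refl arg_cong[where f="\<lambda>t. of_real (F _) * t"])
    fix l k
    have "l * k + l * (N - m) = (k + N - m) * l"
      using m by (simp add: algebra_simps)
    then show "\<omega> ^ (l * k) * \<omega> ^ (l * (N - m)) = (\<omega> ^ (k + N - m)) ^ l"
      by (metis power_add power_mult)
  qed
  also have "\<dots> = (\<Sum>k\<in>{1..N}. of_real (F k) * (\<Sum>l<N. (\<omega> ^ (k + N - m)) ^ l))"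
    by (simp add: sum.swap[of _ "{..<N}"] sum_distrib_left)
  also have "\<dots> = (\<Sum>k\<in>{1..N}. if k = m then of_real (F m) * of_nat N else 0)"
    by (intro sum.cong refl) (simp add: orthogonality)
  also have "\<dots> = of_real (F m) * of_nat N"
    using m by simp
  finally show ?thesis
    using N by simp
qed

lemma cyc_laplacian_eigenvalue_iff:
  assumes N: "1 \<le> N"
  shows "(\<exists>F. (\<exists>k\<in>{1..N}. F k \<noteq> 0) \<and> (\<forall>k\<in>{1..N}. cyc_laplacian N F k = lam * F k))
    \<longleftrightarrow> lam \<in> cycle_eigenvalue N ` {..<N}"
proof
  assume "\<exists>F. (\<exists>k\<in>{1..N}. F k \<noteq> 0) \<and> (\<forall>k\<in>{1..N}. cyc_laplacian N F k = lam * F k)"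
  then obtain F m where m: "m \<in> {1..N}" "F m \<noteq> 0"
    and eigen: "\<forall>k\<in>{1..N}. cyc_laplacian N F k = lam * F k" by blast
  show "lam \<in> cycle_eigenvalue N ` {..<N}"
  proof (rule ccontr)
    assume "lam \<notin> cycle_eigenvalue N ` {..<N}"
    then have "\<forall>l<N. cyc_dft N F l = 0"
      using cyc_dft_nonzero_imp_eigenvalue[OF N eigen] by blast
    then show False
      using cyc_dft_eq_0_imp_eq_0[OF N _ m(1)] m(2) by blast
  qed
next
  assume "lam \<in> cycle_eigenvalue N ` {..<N}"
  then obtain l where lam: "lam = cycle_eigenvalue N l" by blast
  define F where "F k = cos (real (k - 1) * (2 * pi * real l / real N))" for k
  have "F 1 \<noteq> 0" "1 \<in> {1..N}"
    using N by (auto simp: F_def)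
  moreover have "\<forall>k\<in>{1..N}. cyc_laplacian N F k = lam * F k"
    unfolding lam F_def using cyc_laplacian_trig_eigenvector[of cos] by blast
  ultimately show "\<exists>F. (\<exists>k\<in>{1..N}. F k \<noteq> 0) \<and> (\<forall>k\<in>{1..N}. cyc_laplacian N F k = lam * F k)"
    by blast
qed

locale ordered_atoms =
  fixes N :: nat and z :: "nat \<Rightarrow> real"
  assumes N_pos: "1 \<le> N" and first_atom_nonneg: "0 \<le> z 1" and last_atom_less_1: "z N < 1"
    and atoms_increasing: "\<forall>i\<in>{1..<N}. z i < z (Suc i)"
begin

lemma atom_less: "1 \<le> i \<Longrightarrow> i < k \<Longrightarrow> k \<le> N \<Longrightarrow> z i < z k"
proof (induction k)
  case (Suc k)
  have "z k < z (Suc k)"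
    using atoms_increasing Suc.prems by auto
  then show ?case
    using Suc by (cases "i = k") force+
qed simp

lemma strict_mono_on_atoms: "strict_mono_on {1..N} z"
  by (rule strict_mono_onI) (auto intro: atom_less)

lemma atom_le: "i \<in> {1..N} \<Longrightarrow> k \<in> {1..N} \<Longrightarrow> i \<le> k \<Longrightarrow> z i \<le> z k"
  by (rule strict_mono_on_leD[OF strict_mono_on_atoms])

lemma atom_in_unit_interval: "i \<in> {1..N} \<Longrightarrow> z i \<in> {0..<1}"
  using atom_le[of 1 i] atom_le[of i N] first_atom_nonneg last_atom_less_1 by auto

lemma inner_cell_in_unit_interval:
  "j \<in> {1..N-1} \<Longrightarrow> z j < x \<Longrightarrow> x \<le> z (Suc j) \<Longrightarrow> x \<in> {0..1}"
  using atom_in_unit_interval[of j] atom_in_unit_interval[of "Suc j"] by fastforce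

text \<open>Cell \<open>0\<close> is \<open>(-\<infinity>, z 1]\<close> and cell \<open>N\<close> is \<open>(z N, \<infinity>)\<close>; on the circle \<open>[0,1]/(0 \<sim> 1)\<close>
  they form a single interval, which is why both carry the value at the first atom.\<close>

definition cell :: "nat \<Rightarrow> real \<Rightarrow> bool" where
  "cell j x \<longleftrightarrow> (j = 0 \<or> z j < x) \<and> (j = N \<or> x \<le> z (Suc j))"

lemma cell_exists: "\<exists>j\<le>N. cell j x"
proof -
  define S where "S = {i\<in>{1..N}. z i < x}"
  show ?thesis
  proof (cases "S = {}")
    case True
    then have "x \<le> z 1"
      using N_pos unfolding S_def by force
    then show ?thesis
      by (auto simp: cell_def)
  next
    case False
    define j where "j = Max S"
    have j: "j \<in> S"
      using Max_in[of S] False by (simp add: S_def j_def)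
    have "finite S"
      by (simp add: S_def)
    then have "Suc j \<notin> S"
      unfolding j_def by (meson Max_ge Suc_n_not_le_n)
    then have "j = N \<or> x \<le> z (Suc j)"
      using j by (auto simp: S_def)
    then show ?thesis
      using j by (auto simp: S_def cell_def)
  qed
qed

lemma atom_in_cell: "k \<in> {1..N} \<Longrightarrow> cell (k - 1) (z k)"
  using atom_less[of "k - 1" k] by (cases "k = 1") (auto simp: cell_def)

lemma atoms_below_cell:
  assumes "j \<le> N" "cell j x"
  shows "{i\<in>{1..N}. 0 \<le> z i \<and> z i < x} = {1..j}"
proof (intro set_eqI iffI)
  fix i assume i: "i \<in> {i\<in>{1..N}. 0 \<le> z i \<and> z i < x}"
  show "i \<in> {1..j}"
  proof (rule ccontr)
    assume "i \<notin> {1..j}"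
    then have "j < N" "z (Suc j) \<le> z i"
      using i atom_le[of "Suc j" i] by auto
    then show False
      using assms(2) i by (auto simp: cell_def)
  qed
next
  fix i assume i: "i \<in> {1..j}"
  then have "z i \<le> z j" "z j < x"
    using assms atom_le[of i j] by (auto simp: cell_def)
  then show "i \<in> {i\<in>{1..N}. 0 \<le> z i \<and> z i < x}"
    using i assms(1) atom_in_unit_interval[of i] by auto
qed

lemma mu_int_below_cell:
  assumes "j \<le> N" "cell j x"
  shows "mu_int_below N z g x = (\<Sum>i=1..j. (1 / real N) * g (z i))"
  unfolding mu_int_below_def sum.inter_filter[symmetric, OF finite_atLeastAtMost]
    atoms_below_cell[OF assms] ..

text \<open>At the atom \<open>z i\<close> this is \<open>N (\<Phi> (i+1) - \<Phi> i)\<close>, so its \<open>\<mu>\<close>-integral over \<open>[0,x)\<close>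
  telescopes; its values off the atoms are irrelevant.\<close>

definition forward_diff :: "(nat \<Rightarrow> real) \<Rightarrow> real \<Rightarrow> real" where
  "forward_diff \<Phi> y = real N * (\<Phi> (cyc_succ N (inv_into {1..N} z y)) - \<Phi> (inv_into {1..N} z y))"

lemma mu_int_below_forward_diff:
  assumes "j \<le> N" "cell j x"
  shows "mu_int_below N z (forward_diff \<Phi>) x = \<Phi> (cyc_succ N j) - \<Phi> 1"
proof -
  have "mu_int_below N z (forward_diff \<Phi>) x = (\<Sum>i=1..j. \<Phi> (cyc_succ N i) - \<Phi> i)"
    unfolding mu_int_below_cell[OF assms] forward_diff_def
    using assms(1) N_pos strict_mono_on_imp_inj_on[OF strict_mono_on_atoms]
    by (intro sum.cong) auto
  then show ?thesis
    using sum_cyc_succ_telescope[OF N_pos assms(1)] by simp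
qed

lemma D1_if_cellwise:
  assumes "\<forall>x\<in>{0..1}. \<forall>j\<le>N. cell j x \<longrightarrow> \<phi> x = \<Phi> (cyc_succ N j)"
  shows "D1 N z \<phi>"
proof -
  have "cell 0 0" "cell N 1"
    using first_atom_nonneg last_atom_less_1 by (auto simp: cell_def)
  then have ends: "\<phi> 0 = \<Phi> 1" "\<phi> 1 = \<Phi> 1"
    using assms[rule_format, of 0 0] assms[rule_format, of 1 N] N_pos by (auto simp: cyc_succ_def)
  have "\<phi> x = \<phi> 0 + mu_int_below N z (forward_diff \<Phi>) x" if "x \<in> {0..1}" for x
  proof -
    obtain j where "j \<le> N" "cell j x"
      using cell_exists by blast
    then show ?thesis
      using assms that ends mu_int_below_forward_diff by auto
  qed
  then show ?thesis
    unfolding D1_def using ends by auto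
qed

lemma exists_D1_with_atom_values: "\<exists>g. D1 N z g \<and> (\<forall>k\<in>{1..N}. g (z k) = G k)"
proof -
  define g where "g x = G 1 + mu_int_below N z (forward_diff G) x" for x
  have cellwise: "g x = G (cyc_succ N j)" if "j \<le> N" "cell j x" for j x
    using mu_int_below_forward_diff[OF that, of G] by (simp add: g_def)
  have "g (z k) = G k" if "k \<in> {1..N}" for k
    using cellwise[OF _ atom_in_cell[OF that]] that by (auto simp: cyc_succ_def)
  moreover have "D1 N z g"
    by (rule D1_if_cellwise[of g G]) (use cellwise in blast)
  ultimately show ?thesis
    by blast
qed

lemma is_mu_laplacian_iff:
  "is_mu_laplacian N z f h \<longleftrightarrow> (\<forall>k\<in>{1..N}. h (z k) = cyc_laplacian N (f \<circ> z) k)"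
proof
  assume lap: "is_mu_laplacian N z f h"
  show "\<forall>k\<in>{1..N}. h (z k) = cyc_laplacian N (f \<circ> z) k"
  proof
    fix k assume k: "k \<in> {1..N}"
    obtain g where g: "D1 N z g" "\<forall>i\<in>{1..N}. g (z i) = (if i = k then 1 else 0)"
      using exists_D1_with_atom_values[of "\<lambda>i. if i = k then 1 else 0"] by blast
    have "energy N z f g = - (\<Sum>i\<in>{1..N}. if i = k then (1 / real N) * cyc_laplacian N (f \<circ> z) k else 0)"
      unfolding energy_eq_sum_cyc_laplacian[OF N_pos] using g(2)
      by (intro arg_cong[where f=uminus] sum.cong) auto
    moreover have "mu_ip N z h g = (\<Sum>i\<in>{1..N}. if i = k then (1 / real N) * h (z k) else 0)"
      unfolding mu_ip_def using g(2) by (intro sum.cong) auto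
    ultimately show "h (z k) = cyc_laplacian N (f \<circ> z) k"
      using lap g(1) k N_pos unfolding is_mu_laplacian_def by auto
  qed
next
  assume "\<forall>k\<in>{1..N}. h (z k) = cyc_laplacian N (f \<circ> z) k"
  then show "is_mu_laplacian N z f h"
    unfolding is_mu_laplacian_def mu_ip_def energy_eq_sum_cyc_laplacian[OF N_pos]
    by (simp add: sum_negf[symmetric])
qed

lemma D2_iff_D1: "D2 N z f \<longleftrightarrow> D1 N z f"
proof -
  have "is_mu_laplacian N z f (\<lambda>x. cyc_laplacian N (f \<circ> z) (inv_into {1..N} z x))"
    unfolding is_mu_laplacian_iff
    using inv_into_f_f[OF strict_mono_on_imp_inj_on[OF strict_mono_on_atoms]] by simp
  then show ?thesis
    unfolding D2_def by blast
qed

lemma mu_eigenvalue_iff: "mu_eigenvalue N z lam \<longleftrightarrow> lam \<in> cycle_eigenvalue N ` {..<N}"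
proof -
  have "mu_eigenvalue N z lam \<longleftrightarrow>
      (\<exists>F. (\<exists>k\<in>{1..N}. F k \<noteq> 0) \<and> (\<forall>k\<in>{1..N}. cyc_laplacian N F k = lam * F k))"
  proof
    assume "mu_eigenvalue N z lam"
    then obtain f where "mu_nonzero N z f" "is_mu_laplacian N z f (\<lambda>x. lam * f x)"
      unfolding mu_eigenvalue_def by blast
    then show "\<exists>F. (\<exists>k\<in>{1..N}. F k \<noteq> 0) \<and> (\<forall>k\<in>{1..N}. cyc_laplacian N F k = lam * F k)"
      unfolding mu_nonzero_def is_mu_laplacian_iff by (intro exI[of _ "f \<circ> z"]) auto
  next
    assume "\<exists>F. (\<exists>k\<in>{1..N}. F k \<noteq> 0) \<and> (\<forall>k\<in>{1..N}. cyc_laplacian N F k = lam * F k)"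
    then obtain F where nonzero: "\<exists>k\<in>{1..N}. F k \<noteq> 0"
      and eigen: "\<forall>k\<in>{1..N}. cyc_laplacian N F k = lam * F k" by blast
    obtain g where g: "D1 N z g" "\<forall>k\<in>{1..N}. g (z k) = F k"
      using exists_D1_with_atom_values by blast
    have "is_mu_laplacian N z g (\<lambda>x. lam * g x)"
      unfolding is_mu_laplacian_iff using eigen g(2) cyc_laplacian_cong[of N "g \<circ> z" F] by simp
    then show "mu_eigenvalue N z lam"
      unfolding mu_eigenvalue_def mu_nonzero_def D2_iff_D1 using g nonzero by (intro exI[of _ g]) auto
  qed
  then show ?thesis
    using cyc_laplacian_eigenvalue_iff[OF N_pos] by simp
qed

definition piecewise_constant :: "real \<Rightarrow> (nat \<Rightarrow> real) \<Rightarrow> (real \<Rightarrow> real) \<Rightarrow> bool" where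
  "piecewise_constant c v \<phi> \<longleftrightarrow>
     (\<forall>x\<in>{0..1}. x \<le> z 1 \<or> z N < x \<longrightarrow> \<phi> x = c) \<and>
     (\<forall>j\<in>{1..N-1}. \<forall>x. z j < x \<and> x \<le> z (Suc j) \<longrightarrow> \<phi> x = v j)"

lemma piecewise_constant_at_atom:
  assumes "piecewise_constant c v \<phi>" "k \<in> {1..N}"
  shows "\<phi> (z k) = (if k = 1 then c else v (k - 1))"
proof (cases "k = 1")
  case True
  then show ?thesis
    using assms atom_in_unit_interval[OF assms(2)] by (auto simp: piecewise_constant_def)
next
  case False
  then have "k - 1 \<in> {1..N-1}" "z (k - 1) < z k" "z k \<le> z (Suc (k - 1))"
    using assms(2) atom_less[of "k - 1" k] by auto
  then have "\<phi> (z k) = v (k - 1)"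
    using assms(1) unfolding piecewise_constant_def by blast
  then show ?thesis
    using False by simp
qed

lemma D1_if_piecewise_constant:
  assumes "piecewise_constant c v \<phi>"
  shows "D1 N z \<phi>"
proof (rule D1_if_cellwise[where \<Phi>="\<lambda>k. if k = 1 then c else v (k - 1)"], intro ballI allI impI)
  fix x j assume "x \<in> {0..1}" "j \<le> N" "cell j x"
  then show "\<phi> x = (if cyc_succ N j = 1 then c else v (cyc_succ N j - 1))"
    using assms N_pos by (auto simp: piecewise_constant_def cell_def cyc_succ_def)
qed

end

definition trig_mode :: "nat \<Rightarrow> nat \<Rightarrow> real \<Rightarrow> real" where
  "trig_mode N l = (if 0 < l \<and> 2 * l < N then sin else cos)"

lemma (in ordered_atoms) trig_mode_eigenfunction:
  fixes l :: nat
  defines "\<theta> \<equiv> 2 * pi * real l / real N"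
  assumes \<phi>: "piecewise_constant (trig_mode N l 0) (\<lambda>j. trig_mode N l (real j * \<theta>)) \<phi>"
  shows "D2 N z \<phi> \<and> mu_nonzero N z \<phi> \<and> is_mu_laplacian N z \<phi> (\<lambda>x. cycle_eigenvalue N l * \<phi> x)"
proof (intro conjI)
  have atom_value: "\<phi> (z k) = trig_mode N l (real (k - 1) * \<theta>)" if "k \<in> {1..N}" for k
    using piecewise_constant_at_atom[OF \<phi> that] by simp
  show "D2 N z \<phi>"
    unfolding D2_iff_D1 by (rule D1_if_piecewise_constant[OF \<phi>])
  have mode: "trig_mode N l = sin \<or> trig_mode N l = cos"
    by (simp add: trig_mode_def)
  show "is_mu_laplacian N z \<phi> (\<lambda>x. cycle_eigenvalue N l * \<phi> x)"
    unfolding is_mu_laplacian_iff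
  proof
    fix k assume k: "k \<in> {1..N}"
    have "cyc_laplacian N (\<phi> \<circ> z) k = cyc_laplacian N (\<lambda>k. trig_mode N l (real (k - 1) * \<theta>)) k"
      using k by (intro cyc_laplacian_cong) (simp_all add: atom_value)
    also have "\<dots> = cycle_eigenvalue N l * trig_mode N l (real (k - 1) * \<theta>)"
      unfolding \<theta>_def by (rule cyc_laplacian_trig_eigenvector[OF mode k])
    finally show "cycle_eigenvalue N l * \<phi> (z k) = cyc_laplacian N (\<phi> \<circ> z) k"
      using atom_value[OF k] by simp
  qed
  show "mu_nonzero N z \<phi>"
  proof (cases "0 < l \<and> 2 * l < N")
    case True
    then have "0 < \<theta>" "\<theta> < pi"
      by (auto simp: \<theta>_def field_simps)
    then have "\<phi> (z 2) \<noteq> 0"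
      using True atom_value[of 2] sin_gt_zero[of \<theta>] by (simp add: trig_mode_def)
    then show ?thesis
      using True by (auto simp: mu_nonzero_def intro!: bexI[of _ 2])
  next
    case False
    then show ?thesis
      using N_pos atom_value[of 1] by (auto simp: mu_nonzero_def trig_mode_def intro!: bexI[of _ 1])
  qed
qed

lemma Im_exp_2pi_i_mult:
  "Im (exp (2 * of_real pi * \<i> * of_nat j * of_nat l / of_nat N)) = sin (real j * (2 * pi * real l / real N))"
  and Re_exp_2pi_i_mult:
  "Re (exp (2 * of_real pi * \<i> * of_nat j * of_nat l / of_nat N)) = cos (real j * (2 * pi * real l / real N))"
  by (simp_all add: Im_exp Re_exp algebra_simps)

theorem corollary4p2:
  fixes N :: nat and z :: "nat \<Rightarrow> real" and f :: "nat \<Rightarrow> real \<Rightarrow> real"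
  assumes N3: "N \<ge> 3"
    and z0: "0 \<le> z 1" and zN: "z N < 1"
    and zmono: "\<forall>i\<in>{1..<N}. z i < z (Suc i)"
    and f0: "\<forall>x\<in>{0..1}. f 0 x = 1"
    and f_low_out: "\<forall>l. 0 < l \<and> 2 * l < N \<longrightarrow>
          (\<forall>x\<in>{0..1}. x \<le> z 1 \<or> z N < x \<longrightarrow> f l x = 0)"
    and f_low_in: "\<forall>l. 0 < l \<and> 2 * l < N \<longrightarrow>
          (\<forall>j\<in>{1..N-1}. \<forall>x. z j < x \<and> x \<le> z (Suc j) \<longrightarrow>
              f l x = Im (exp (2 * of_real pi * \<i> * of_nat j * of_nat l / of_nat N)))"
    and f_high_out: "\<forall>l. N \<le> 2 * l \<and> l \<le> N - 1 \<longrightarrow>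
          (\<forall>x\<in>{0..1}. x \<le> z 1 \<or> z N < x \<longrightarrow> f l x = 1)"
    and f_high_in: "\<forall>l. N \<le> 2 * l \<and> l \<le> N - 1 \<longrightarrow>
          (\<forall>j\<in>{1..N-1}. \<forall>x. z j < x \<and> x \<le> z (Suc j) \<longrightarrow>
              f l x = Re (exp (2 * of_real pi * \<i> * of_nat j * of_nat l / of_nat N)))"
  shows "(\<forall>l<N. D2 N z (f l) \<and> mu_nonzero N z (f l) \<and>
            is_mu_laplacian N z (f l)
              (\<lambda>x. (- 2 * real N ^ 2 + 2 * real N ^ 2 * cos (2 * pi * real l / real N)) * f l x))
       \<and> {lam. mu_eigenvalue N z lam} =
           (\<lambda>l. - 2 * real N ^ 2 + 2 * real N ^ 2 * cos (2 * pi * real l / real N)) ` {..<N}"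
proof -
  interpret ordered_atoms N z
    using N3 z0 zN zmono by unfold_locales auto
  have "piecewise_constant (trig_mode N l 0) (\<lambda>j. trig_mode N l (real j * (2 * pi * real l / real N))) (f l)"
    if l: "l < N" for l
  proof -
    consider "l = 0" | "0 < l \<and> 2 * l < N" | "N \<le> 2 * l \<and> l \<le> N - 1"
      using l by linarith
    then show ?thesis
    proof cases
      case 1
      then show ?thesis
        using f0 inner_cell_in_unit_interval by (auto simp: piecewise_constant_def trig_mode_def)
    next
      case 2
      then show ?thesis
        using f_low_out f_low_in by (simp add: piecewise_constant_def trig_mode_def Im_exp_2pi_i_mult)
    next
      case 3
      then show ?thesis
        using f_high_out f_high_in by (simp add: piecewise_constant_def trig_mode_def Re_exp_2pi_i_mult)
    qed
  qed
  then show ?thesis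
    using trig_mode_eigenfunction mu_eigenvalue_iff unfolding cycle_eigenvalue_def by auto
qed

end
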